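(* In the noiseless discrete channel setting described in the context, suppose Assumption A holds, and suppose that for some sequence of sample sizes $n=n_N$ it holds that $\lim_{N\to\infty}\mathrm P(Z_{N,\delta}>0)=0$ for all $\delta\in(0,2]$. Then $$\lim_{N\to\infty}\frac{H(\theta\mid Y^n,X^n)}{H(\theta)}=0.$$
   Context: Setting. For each $N\in\mathbb N$: $\Theta=\Theta_N$ is a finite subset of the unit sphere of $\mathbb R^N$ of cardinality $M=M_N$, with $M_N\to\infty$ and $\langle\theta,\theta'\rangle\ge 0$ for all $\theta,\theta'\in\Theta$; $P_\Theta$ is the uniform distribution on $\Theta$; $\mathcal D=\mathcal D_N$ is a distribution on $\mathbb R^{L}$; $g=g_N:\mathbb R^L\times\mathbb R^N\to\mathcal Y$ with $\mathcal Y$ finite of cardinality independent of $N$. One draws $\theta\sim P_\Theta$, independently $X_1,\dots,X_n$ i.i.d. from $\mathcal D$, and sets $Y_i=g(X_i,\theta)$; $Y^n=(Y_i)_{i\le n}$, $X^n=(X_i)_{i\le n}$. $H$ denotes Shannon entropy (natural log), so $H(\theta)=\log M$. For $\delta\in[0,2]$, $Z_{N,\delta}$ is the number of $\theta'\in\Theta$ with $Y_i=g(X_i,\theta')$ for all $i\le n$ and $\|\theta-\theta'\|^2\ge\delta$. Assumption A: for $\theta,\theta'$ independent draws from $P_\Theta$, $\lim_{\delta\to0^+}\lim_{N\to\infty}\frac{\log\left(M\,P_\Theta^{\otimes2}(\langle\theta,\theta'\rangle\ge 1-\delta)\right)}{\log M}=0$; and for any $\theta\in\Theta$, if $\theta'\sim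 P_\Theta$, then for every $\epsilon>0$, $\lim_N P_\Theta(\langle\theta',\theta\rangle\ge\epsilon)=0$. *)

theory Defs
  imports "HOL-Probability.Probability"
begin

(* Vectors of R^N are represented as functions nat => real vanishing outside {..<N}. *)

definition ip :: "nat \<Rightarrow> (nat \<Rightarrow> real) \<Rightarrow> (nat \<Rightarrow> real) \<Rightarrow> real" where
  "ip N u v = (\<Sum>i<N. u i * v i)"

definition sqdist :: "nat \<Rightarrow> (nat \<Rightarrow> real) \<Rightarrow> (nat \<Rightarrow> real) \<Rightarrow> real" where
  "sqdist N u v = (\<Sum>i<N. (u i - v i)^2)"

definition on_unit_sphere :: "nat \<Rightarrow> (nat \<Rightarrow> real) set \<Rightarrow> bool" where
  "on_unit_sphere N T \<longleftrightarrow> (\<forall>t\<in>T. (\<forall>i\<ge>N. t i = 0) \<and> ip N t t = 1)"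

definition entropy_pmf :: "'a pmf \<Rightarrow> real" where
  "entropy_pmf p = - (\<Sum>a\<in>set_pmf p. pmf p a * ln (pmf p a))"

definition cond_entropy_pmf :: "('a \<times> 'b) pmf \<Rightarrow> real" where
  "cond_entropy_pmf J = entropy_pmf J - entropy_pmf (map_pmf snd J)"

definition sample_law :: "nat \<Rightarrow> 'x measure \<Rightarrow> (nat \<Rightarrow> 'x) measure" where
  "sample_law n D = PiM {..<n} (\<lambda>_. D)"

definition labels :: "('x \<Rightarrow> 't \<Rightarrow> 'y) \<Rightarrow> nat \<Rightarrow> (nat \<Rightarrow> 'x) \<Rightarrow> 't \<Rightarrow> 'y list" where
  "labels g n xs t = map (\<lambda>i. g (xs i) t) [0..<n]"

(* H(theta | Y^n, X^n), theta uniform on T, independent of X^n: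
   E_{X^n}[ H(theta | Y^n, X^n = xs) ] *)
definition cond_entropy_post ::
  "'t set \<Rightarrow> ('x \<Rightarrow> 't \<Rightarrow> 'y) \<Rightarrow> 'x measure \<Rightarrow> nat \<Rightarrow> real" where
  "cond_entropy_post T g D n =
     (\<integral>xs. cond_entropy_pmf (map_pmf (\<lambda>t. (t, labels g n xs t)) (pmf_of_set T))
        \<partial>(sample_law n D))"

(* P(Z_{N,delta} > 0), joint probability over theta ~ unif(T) and X^n ~ D^n *)
definition prob_Z_pos ::
  "nat \<Rightarrow> (nat \<Rightarrow> real) set \<Rightarrow> ('x \<Rightarrow> (nat \<Rightarrow> real) \<Rightarrow> 'y) \<Rightarrow> 'x measure \<Rightarrow> nat \<Rightarrow> real \<Rightarrow> real" where
  "prob_Z_pos N T g D n \<delta> =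
     (\<Sum>t\<in>T. measure (sample_law n D)
        {xs \<in> space (sample_law n D).
           \<exists>t'\<in>T. (\<forall>i<n. g (xs i) t' = g (xs i) t) \<and> sqdist N t t' \<ge> \<delta>}) / real (card T)"

end

theory Submission
  imports Defs
begin

(* Given the sample, the posterior of theta is uniform on the parameters producing the same labels,
   so H(theta | Y^n, X^n) is the average over theta of ln |class of theta|.  Unless some parameter
   at squared distance at least 2 delta is consistent with the sample (probability P(Z_{N,2 delta} > 0)), the
   class of theta lies in the spherical cap of inner product at least 1 - delta around theta;
   otherwise it is bounded by the trivial ln M.  By Jensen the averaged log-size of the caps is at
   most the logarithm of the quantity in Assumption A, so dividing by ln M and letting first
   N -> infinity and then delta -> 0 gives the claim. *)

lemma entropy_map_pmf_of_set:
  assumes "finite S" and "S \<noteq> {}"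
  shows "entropy_pmf (map_pmf F (pmf_of_set S)) =
    - (\<Sum>s\<in>S. ln (real (card {s'\<in>S. F s' = F s}) / real (card S))) / real (card S)"
proof -
  let ?m = "real (card S)"
  let ?c = "\<lambda>b. real (card {s'\<in>S. F s' = b})"
  have pmf_map: "pmf (map_pmf F (pmf_of_set S)) b = ?c b / ?m" for b
  proof -
    have "S \<inter> F -` {b} = {s'\<in>S. F s' = b}" by auto
    then show ?thesis using assms by (simp add: pmf_map measure_pmf_of_set)
  qed
  have "(\<Sum>s\<in>S. ln (?c (F s) / ?m)) / ?m = (\<Sum>s\<in>S. ln (?c (F s) / ?m) / ?m)"
    by (simp add: sum_divide_distrib)
  also have "\<dots> = (\<Sum>b\<in>F ` S. \<Sum>s\<in>{s'\<in>S. F s' = b}. ln (?c (F s) / ?m) / ?m)"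
    by (rule sum.image_gen[OF assms(1)])
  also have "\<dots> = (\<Sum>b\<in>F ` S. ?c b * (ln (?c b / ?m) / ?m))"
    by (intro sum.cong refl) simp
  also have "\<dots> = (\<Sum>b\<in>F ` S. pmf (map_pmf F (pmf_of_set S)) b * ln (pmf (map_pmf F (pmf_of_set S)) b))"
    by (intro sum.cong refl) (simp add: pmf_map)
  finally show ?thesis
    using assms by (simp add: entropy_pmf_def)
qed

lemma cond_entropy_graph_pmf_of_set:
  assumes "finite S" and "S \<noteq> {}"
  shows "cond_entropy_pmf (map_pmf (\<lambda>s. (s, F s)) (pmf_of_set S)) =
    (\<Sum>s\<in>S. ln (real (card {s'\<in>S. F s' = F s}))) / real (card S)"
proof -
  let ?m = "real (card S)"
  have m_pos: "?m > 0" using assms by (simp add: card_gt_0_iff)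
  have class_pos: "real (card {s'\<in>S. F s' = F s}) > 0" if "s \<in> S" for s
    using that assms(1) by (auto simp: card_gt_0_iff)
  have "{s'\<in>S. (s', F s') = (s, F s)} = {s}" if "s \<in> S" for s
    using that by auto
  then have joint: "entropy_pmf (map_pmf (\<lambda>s. (s, F s)) (pmf_of_set S)) = ln ?m"
    using m_pos by (simp add: entropy_map_pmf_of_set[OF assms] ln_div cong: sum.cong)
  have "map_pmf snd (map_pmf (\<lambda>s. (s, F s)) (pmf_of_set S)) = map_pmf F (pmf_of_set S)"
    by (simp add: pmf.map_comp o_def)
  then have marginal: "entropy_pmf (map_pmf snd (map_pmf (\<lambda>s. (s, F s)) (pmf_of_set S))) =
      ln ?m - (\<Sum>s\<in>S. ln (real (card {s'\<in>S. F s' = F s}))) / ?m"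
    using class_pos m_pos
    by (simp add: entropy_map_pmf_of_set[OF assms] ln_div sum_subtractf diff_divide_distrib)
  show ?thesis
    unfolding cond_entropy_pmf_def joint marginal by simp
qed

lemma mean_ln_le_ln_mean:
  fixes c :: "'a \<Rightarrow> real"
  assumes "finite T" and "T \<noteq> {}" and "\<And>t. t \<in> T \<Longrightarrow> 0 < c t"
  shows "(\<Sum>t\<in>T. ln (c t)) / real (card T) \<le> ln ((\<Sum>t\<in>T. c t) / real (card T))"
proof -
  have m_pos: "real (card T) > 0" using assms by (simp add: card_gt_0_iff)
  have "(\<Sum>t\<in>T. 1 / real (card T) * ln (c t)) \<le> ln (\<Sum>t\<in>T. (1 / real (card T)) *\<^sub>R c t)"
    by (rule concave_on_sum[OF assms(1,2) ln_concave]) (use assms m_pos in auto)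
  then show ?thesis
    by (simp add: sum_divide_distrib)
qed

lemma sqdist_eq_ip: "sqdist N u v = ip N u u + ip N v v - 2 * ip N u v"
  unfolding sqdist_def ip_def
  by (simp add: power2_diff sum.distrib sum_subtractf sum_distrib_left power2_eq_square algebra_simps)

lemma sqdist_on_unit_sphere:
  assumes "on_unit_sphere N T" and "t \<in> T" and "s \<in> T"
  shows "sqdist N t s = 2 - 2 * ip N t s"
  using assms by (simp add: sqdist_eq_ip on_unit_sphere_def)

lemma pred_eq_count_space:
  fixes f h :: "'a \<Rightarrow> 'y::countable"
  assumes [measurable]: "f \<in> measurable M (count_space UNIV)" "h \<in> measurable M (count_space UNIV)"
  shows "Measurable.pred M (\<lambda>x. f x = h x)"
proof -
  have "Measurable.pred M (\<lambda>x. \<exists>y. f x = y \<and> h x = y)" by measurable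
  then show ?thesis by simp
qed

lemma tendsto_zero_if_bounded_by_vanishing_family:
  fixes a :: "nat \<Rightarrow> real" and u :: "real \<Rightarrow> nat \<Rightarrow> real" and f :: "real \<Rightarrow> real"
  assumes nonneg: "\<forall>\<^sub>F N in sequentially. 0 \<le> a N"
    and bound: "\<forall>\<^sub>F \<delta> in at_right 0. \<forall>\<^sub>F N in sequentially. a N \<le> u \<delta> N"
    and u_lim: "\<forall>\<^sub>F \<delta> in at_right 0. u \<delta> \<longlonglongrightarrow> f \<delta>"
    and f_lim: "(f \<longlongrightarrow> 0) (at_right 0)"
  shows "a \<longlonglongrightarrow> 0"
proof (rule tendstoI)
  fix e :: real assume "0 < e"
  have "\<forall>\<^sub>F \<delta> in at_right 0. (\<forall>\<^sub>F N in sequentially. a N \<le> u \<delta> N) \<and> u \<delta> \<longlonglongrightarrow> f \<delta> \<and> f \<delta> < e"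
    using bound u_lim order_tendstoD(2)[OF f_lim \<open>0 < e\<close>] by eventually_elim blast
  then obtain \<delta> where bound_\<delta>: "\<forall>\<^sub>F N in sequentially. a N \<le> u \<delta> N"
    and "u \<delta> \<longlonglongrightarrow> f \<delta>" and "f \<delta> < e"
    using eventually_happens' trivial_limit_at_right_real by blast
  then have "\<forall>\<^sub>F N in sequentially. u \<delta> N < e"
    by (intro order_tendstoD(2))
  with nonneg bound_\<delta> show "\<forall>\<^sub>F N in sequentially. dist (a N) 0 < e"
    by eventually_elim simp
qed

definition consistent_params :: "'t set \<Rightarrow> ('x \<Rightarrow> 't \<Rightarrow> 'y) \<Rightarrow> nat \<Rightarrow> (nat \<Rightarrow> 'x) \<Rightarrow> 't \<Rightarrow> 't set" where
  "consistent_params T g n xs t = {t'\<in>T. labels g n xs t' = labels g n xs t}"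

definition spherical_cap :: "nat \<Rightarrow> (nat \<Rightarrow> real) set \<Rightarrow> real \<Rightarrow> (nat \<Rightarrow> real) \<Rightarrow> (nat \<Rightarrow> real) set" where
  "spherical_cap N T \<delta> t = {t'\<in>T. 1 - \<delta> \<le> ip N t t'}"

definition confusion_event ::
  "nat \<Rightarrow> (nat \<Rightarrow> real) set \<Rightarrow> ('x \<Rightarrow> (nat \<Rightarrow> real) \<Rightarrow> 'y) \<Rightarrow> 'x measure \<Rightarrow> nat \<Rightarrow> real
     \<Rightarrow> (nat \<Rightarrow> real) \<Rightarrow> (nat \<Rightarrow> 'x) set" where
  "confusion_event N T g D n \<delta> t =
     {xs \<in> space (sample_law n D). \<exists>t'\<in>consistent_params T g n xs t. \<delta> \<le> sqdist N t t'}"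

lemma labels_eq_iff: "labels g n xs t' = labels g n xs t \<longleftrightarrow> (\<forall>i<n. g (xs i) t' = g (xs i) t)"
  by (auto simp: labels_def map_eq_conv)

lemma prob_Z_pos_eq:
  "prob_Z_pos N T g D n \<delta> = (\<Sum>t\<in>T. measure (sample_law n D) (confusion_event N T g D n \<delta> t)) / real (card T)"
  unfolding prob_Z_pos_def confusion_event_def consistent_params_def labels_eq_iff
  by (simp add: Bex_def conj_ac)

lemma self_in_consistent_params: "t \<in> T \<Longrightarrow> t \<in> consistent_params T g n xs t"
  by (simp add: consistent_params_def)

lemma card_consistent_params_pos: "finite T \<Longrightarrow> t \<in> T \<Longrightarrow> 0 < card (consistent_params T g n xs t)"
  using self_in_consistent_params by (force simp: card_gt_0_iff consistent_params_def)

lemma self_in_spherical_cap: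
  "on_unit_sphere N T \<Longrightarrow> t \<in> T \<Longrightarrow> 0 \<le> \<delta> \<Longrightarrow> t \<in> spherical_cap N T \<delta> t"
  by (simp add: spherical_cap_def on_unit_sphere_def)

lemma ln_card_spherical_cap_nonneg:
  assumes "finite T" and "on_unit_sphere N T" and "t \<in> T" and "0 \<le> \<delta>"
  shows "0 \<le> ln (card (spherical_cap N T \<delta> t))"
proof -
  have "0 < card (spherical_cap N T \<delta> t)"
    using self_in_spherical_cap[OF assms(2-4)] assms(1) by (auto simp: card_gt_0_iff spherical_cap_def)
  then show ?thesis by (simp add: Suc_le_eq)
qed

lemma cond_entropy_labels:
  assumes "finite T" and "T \<noteq> {}"
  shows "cond_entropy_pmf (map_pmf (\<lambda>t. (t, labels g n xs t)) (pmf_of_set T)) =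
    (\<Sum>t\<in>T. ln (real (card (consistent_params T g n xs t)))) / real (card T)"
  unfolding consistent_params_def by (rule cond_entropy_graph_pmf_of_set[OF assms])

lemma cond_entropy_post_nonneg:
  assumes "finite T" and "T \<noteq> {}"
  shows "0 \<le> cond_entropy_post T g D n"
  unfolding cond_entropy_post_def cond_entropy_labels[OF assms]
  using card_consistent_params_pos[OF assms(1)]
  by (intro Bochner_Integration.integral_nonneg divide_nonneg_nonneg sum_nonneg ln_ge_zero)
    (simp_all add: Suc_le_eq)

lemma sets_confusion_event:
  fixes g :: "'x \<Rightarrow> (nat \<Rightarrow> real) \<Rightarrow> 'y::countable"
  assumes "finite T" and "\<And>t. t \<in> T \<Longrightarrow> (\<lambda>x. g x t) \<in> measurable D (count_space UNIV)"
    and "t \<in> T"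
  shows "confusion_event N T g D n \<delta> t \<in> sets (sample_law n D)"
proof -
  have label_measurable: "(\<lambda>xs. g (xs i) s) \<in> measurable (sample_law n D) (count_space UNIV)"
    if "i \<in> {..<n}" and "s \<in> T" for i s
    unfolding sample_law_def
    by (rule measurable_compose[OF measurable_component_singleton[OF that(1)] assms(2)[OF that(2)]])
  have "Measurable.pred (sample_law n D)
      (\<lambda>xs. \<exists>t'\<in>{t'\<in>T. \<delta> \<le> sqdist N t t'}. \<forall>i\<in>{..<n}. g (xs i) t' = g (xs i) t)"
    using assms(1,3) by (intro pred_intros_finite pred_eq_count_space label_measurable) auto
  then show ?thesis
    unfolding confusion_event_def consistent_params_def labels_eq_iff pred_def
    by (rule back_subst) auto
qed

lemma ln_card_consistent_params_le:
  assumes "finite T" and "on_unit_sphere N T" and "t \<in> T" and "0 \<le> \<delta>"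
    and "xs \<in> space (sample_law n D)"
  shows "ln (card (consistent_params T g n xs t))
    \<le> ln (card (spherical_cap N T \<delta> t)) + ln (card T) * indicator (confusion_event N T g D n (2 * \<delta>) t) xs"
proof -
  have class_pos: "0 < card (consistent_params T g n xs t)"
    using card_consistent_params_pos assms(1,3) .
  show ?thesis
  proof (cases "xs \<in> confusion_event N T g D n (2 * \<delta>) t")
    case True
    have "card (consistent_params T g n xs t) \<le> card T"
      using assms(1) by (intro card_mono) (auto simp: consistent_params_def)
    then have "ln (card (consistent_params T g n xs t)) \<le> ln (card T)"
      using class_pos by simp
    then show ?thesis
      using True ln_card_spherical_cap_nonneg[OF assms(1-4)] by simp
  next
    case False
    have "consistent_params T g n xs t \<subseteq> spherical_cap N T \<delta> t"
    proof
      fix s assume s: "s \<in> consistent_params T g n xs t"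
      then have "s \<in> T" by (simp add: consistent_params_def)
      moreover have "sqdist N t s < 2 * \<delta>"
        using False s assms(5) by (auto simp: confusion_event_def)
      ultimately show "s \<in> spherical_cap N T \<delta> t"
        using sqdist_on_unit_sphere[OF assms(2,3)] by (simp add: spherical_cap_def)
    qed
    then have "card (consistent_params T g n xs t) \<le> card (spherical_cap N T \<delta> t)"
      using assms(1) by (intro card_mono) (auto simp: spherical_cap_def)
    then show ?thesis
      using False class_pos by simp
  qed
qed

lemma cond_entropy_post_le_mean_ln_cap:
  fixes g :: "'x \<Rightarrow> (nat \<Rightarrow> real) \<Rightarrow> 'y::countable"
  assumes "finite T" and "T \<noteq> {}" and "on_unit_sphere N T" and "prob_space D"
    and "\<And>t. t \<in> T \<Longrightarrow> (\<lambda>x. g x t) \<in> measurable D (count_space UNIV)"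
    and "0 \<le> \<delta>"
  shows "cond_entropy_post T g D n \<le>
    (\<Sum>t\<in>T. ln (card (spherical_cap N T \<delta> t))) / real (card T)
    + ln (card T) * prob_Z_pos N T g D n (2 * \<delta>)"
proof -
  let ?m = "real (card T)"
  let ?P = "sample_law n D"
  let ?E = "confusion_event N T g D n (2 * \<delta>)"
  let ?cap = "\<lambda>t. ln (card (spherical_cap N T \<delta> t))"
  interpret P: prob_space ?P
    unfolding sample_law_def by (intro prob_space_PiM assms(4))
  have E_integrable: "integrable ?P (indicator (?E t) :: _ \<Rightarrow> real)" if "t \<in> T" for t
    using assms(1,5) that
    by (intro integrable_real_indicator sets_confusion_event) (auto simp: less_top[symmetric])
  have E_in_space: "?E t \<inter> space ?P = ?E t" for t
    by (auto simp: confusion_event_def)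
  have "cond_entropy_post T g D n = (\<integral>xs. (\<Sum>t\<in>T. ln (card (consistent_params T g n xs t))) / ?m \<partial>?P)"
    by (simp add: cond_entropy_post_def cond_entropy_labels[OF assms(1,2)])
  also have "\<dots> \<le> (\<integral>xs. (\<Sum>t\<in>T. ?cap t + ln ?m * indicator (?E t) xs) / ?m \<partial>?P)"
  proof (rule integral_mono')
    show "integrable ?P (\<lambda>xs. (\<Sum>t\<in>T. ?cap t + ln ?m * indicator (?E t) xs) / ?m)"
      using E_integrable by auto
  next
    fix xs assume "xs \<in> space ?P"
    then show "(\<Sum>t\<in>T. ln (card (consistent_params T g n xs t))) / ?m
        \<le> (\<Sum>t\<in>T. ?cap t + ln ?m * indicator (?E t) xs) / ?m"
      using ln_card_consistent_params_le[OF assms(1,3) _ assms(6)]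
      by (intro divide_right_mono sum_mono) auto
    show "0 \<le> (\<Sum>t\<in>T. ?cap t + ln ?m * indicator (?E t) xs) / ?m"
      using ln_card_spherical_cap_nonneg[OF assms(1,3) _ assms(6)] assms(1,2)
      by (intro divide_nonneg_nonneg sum_nonneg add_nonneg_nonneg mult_nonneg_nonneg)
        (auto simp: Suc_le_eq card_gt_0_iff)
  qed
  also have "\<dots> = (\<Sum>t\<in>T. ?cap t + ln ?m * measure ?P (?E t)) / ?m"
    using E_integrable
    by (simp add: Bochner_Integration.integral_sum Bochner_Integration.integral_add E_in_space P.prob_space)
  also have "\<dots> = (\<Sum>t\<in>T. ?cap t) / ?m + ln ?m * prob_Z_pos N T g D n (2 * \<delta>)"
    by (simp add: prob_Z_pos_eq sum.distrib sum_distrib_left add_divide_distrib)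
  finally show ?thesis .
qed

lemma cond_entropy_post_le:
  fixes g :: "'x \<Rightarrow> (nat \<Rightarrow> real) \<Rightarrow> 'y::countable"
  assumes "finite T" and "T \<noteq> {}" and "on_unit_sphere N T" and "prob_space D"
    and "\<And>t. t \<in> T \<Longrightarrow> (\<lambda>x. g x t) \<in> measurable D (count_space UNIV)"
    and "0 \<le> \<delta>"
  shows "cond_entropy_post T g D n \<le>
    ln (real (card {(t, t') \<in> T \<times> T. ip N t t' \<ge> 1 - \<delta>}) / real (card T))
    + ln (card T) * prob_Z_pos N T g D n (2 * \<delta>)"
proof -
  have "{(t, t') \<in> T \<times> T. ip N t t' \<ge> 1 - \<delta>} = Sigma T (spherical_cap N T \<delta>)"
    by (auto simp: spherical_cap_def)
  then have card_pairs: "real (card {(t, t') \<in> T \<times> T. ip N t t' \<ge> 1 - \<delta>})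
      = (\<Sum>t\<in>T. real (card (spherical_cap N T \<delta> t)))"
    using assms(1) by (simp add: card_SigmaI spherical_cap_def)
  have "(\<Sum>t\<in>T. ln (card (spherical_cap N T \<delta> t))) / real (card T)
      \<le> ln ((\<Sum>t\<in>T. real (card (spherical_cap N T \<delta> t))) / real (card T))"
    using self_in_spherical_cap[OF assms(3) _ assms(6)] assms(1)
    by (intro mean_ln_le_ln_mean assms(1,2)) (auto simp: card_gt_0_iff spherical_cap_def)
  moreover have "cond_entropy_post T g D n \<le>
      (\<Sum>t\<in>T. ln (card (spherical_cap N T \<delta> t))) / real (card T)
      + ln (card T) * prob_Z_pos N T g D n (2 * \<delta>)"
    by (rule cond_entropy_post_le_mean_ln_cap) (fact assms)+
  ultimately show ?thesis
    unfolding card_pairs by linarith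
qed

lemma cond_entropy_post_div_ln_le:
  fixes g :: "'x \<Rightarrow> (nat \<Rightarrow> real) \<Rightarrow> 'y::countable"
  assumes "finite T" and "1 < card T" and "on_unit_sphere N T" and "prob_space D"
    and "\<And>t. t \<in> T \<Longrightarrow> (\<lambda>x. g x t) \<in> measurable D (count_space UNIV)"
    and "0 \<le> \<delta>"
  shows "cond_entropy_post T g D n / ln (card T) \<le>
    ln (real (card {(t, t') \<in> T \<times> T. ip N t t' \<ge> 1 - \<delta>}) / real (card T)) / ln (card T)
    + prob_Z_pos N T g D n (2 * \<delta>)"
proof -
  let ?L = "ln (real (card {(t, t') \<in> T \<times> T. ip N t t' \<ge> 1 - \<delta>}) / real (card T))"
  let ?Z = "prob_Z_pos N T g D n (2 * \<delta>)"
  have ln_pos: "0 < ln (real (card T))"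
    using assms(2) by simp
  have "cond_entropy_post T g D n \<le> ?L + ln (card T) * ?Z"
    using assms by (intro cond_entropy_post_le) auto
  then have "cond_entropy_post T g D n / ln (card T) \<le> (?L + ln (card T) * ?Z) / ln (card T)"
    using ln_pos by (intro divide_right_mono) auto
  then show ?thesis
    using ln_pos by (simp add: add_divide_distrib)
qed

theorem proposition4:
  fixes \<Theta> :: "nat \<Rightarrow> (nat \<Rightarrow> real) set"
    and L :: "nat \<Rightarrow> nat"
    and D :: "nat \<Rightarrow> (nat \<Rightarrow> real) measure"
    and g :: "nat \<Rightarrow> (nat \<Rightarrow> real) \<Rightarrow> (nat \<Rightarrow> real) \<Rightarrow> 'y::finite"
    and n :: "nat \<Rightarrow> nat"
  assumes fin: "\<And>N. finite (\<Theta> N)"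
    and sphere: "\<And>N. on_unit_sphere N (\<Theta> N)"
    and M_inf: "filterlim (\<lambda>N. real (card (\<Theta> N))) at_top sequentially"
    and nonneg: "\<And>N t t'. t \<in> \<Theta> N \<Longrightarrow> t' \<in> \<Theta> N \<Longrightarrow> ip N t t' \<ge> 0"
    and D_prob: "\<And>N. prob_space (D N)"
    and D_borel: "\<And>N. sets (D N) = sets borel"
    and D_supp: "\<And>N. AE x in D N. \<forall>i\<ge>L N. x i = 0"
    and g_meas: "\<And>N t. t \<in> \<Theta> N \<Longrightarrow> (\<lambda>x. g N x t) \<in> measurable (D N) (count_space UNIV)"
    and A1: "\<exists>f. (\<forall>\<^sub>F \<delta> in at_right 0.
               (\<lambda>N. ln (real (card {(t, t') \<in> \<Theta> N \<times> \<Theta> N. ip N t t' \<ge> 1 - \<delta>})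
                         / real (card (\<Theta> N)))
                     / ln (real (card (\<Theta> N)))) \<longlonglongrightarrow> f \<delta>)
             \<and> (f \<longlongrightarrow> 0) (at_right 0)"
    and A2: "\<And>ts \<epsilon>. (\<And>N. ts N \<in> \<Theta> N) \<Longrightarrow> \<epsilon> > 0 \<Longrightarrow>
               (\<lambda>N. real (card {t' \<in> \<Theta> N. ip N t' (ts N) \<ge> \<epsilon>}) / real (card (\<Theta> N)))
               \<longlonglongrightarrow> 0"
    and noZ: "\<And>\<delta>. 0 < \<delta> \<Longrightarrow> \<delta> \<le> 2 \<Longrightarrow>
               (\<lambda>N. prob_Z_pos N (\<Theta> N) (g N) (D N) (n N) \<delta>) \<longlonglongrightarrow> 0"
  shows "(\<lambda>N. cond_entropy_post (\<Theta> N) (g N) (D N) (n N) / ln (real (card (\<Theta> N))))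
           \<longlonglongrightarrow> 0"
proof -
  let ?C = "\<lambda>N. cond_entropy_post (\<Theta> N) (g N) (D N) (n N) / ln (real (card (\<Theta> N)))"
  let ?A = "\<lambda>\<delta> N. ln (real (card {(t, t') \<in> \<Theta> N \<times> \<Theta> N. ip N t t' \<ge> 1 - \<delta>})
                         / real (card (\<Theta> N))) / ln (real (card (\<Theta> N)))"
  let ?Z = "\<lambda>\<delta> N. prob_Z_pos N (\<Theta> N) (g N) (D N) (n N) (2 * \<delta>)"
  obtain f where A_lim: "\<forall>\<^sub>F \<delta> in at_right 0. ?A \<delta> \<longlonglongrightarrow> f \<delta>" and f_lim: "(f \<longlongrightarrow> 0) (at_right 0)"
    using A1 by blast
  have "\<forall>\<^sub>F N in sequentially. 2 \<le> real (card (\<Theta> N))"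
    using M_inf unfolding filterlim_at_top by blast
  then have M_large: "\<forall>\<^sub>F N in sequentially. 1 < card (\<Theta> N)"
    by eventually_elim linarith
  have small: "\<forall>\<^sub>F \<delta> in at_right 0. 0 < \<delta> \<and> \<delta> \<le> (1::real)"
    unfolding eventually_at_right_field by (intro exI[of _ 1]) auto
  have bound: "\<forall>\<^sub>F N in sequentially. ?C N \<le> ?A \<delta> N + ?Z \<delta> N" if "0 \<le> \<delta>" for \<delta>
    using M_large by eventually_elim (intro cond_entropy_post_div_ln_le fin sphere D_prob g_meas that)
  have Z_lim: "?Z \<delta> \<longlonglongrightarrow> 0" if "0 < \<delta>" and "\<delta> \<le> 1" for \<delta>
    using that by (intro noZ) auto
  show ?thesis
  proof (rule tendsto_zero_if_bounded_by_vanishing_family[where u = "\<lambda>\<delta> N. ?A \<delta> N + ?Z \<delta> N"])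
    show "\<forall>\<^sub>F N in sequentially. 0 \<le> ?C N"
      using M_large by eventually_elim (intro divide_nonneg_nonneg cond_entropy_post_nonneg fin; auto)
    show "\<forall>\<^sub>F \<delta> in at_right 0. \<forall>\<^sub>F N in sequentially. ?C N \<le> ?A \<delta> N + ?Z \<delta> N"
      using small by eventually_elim (intro bound; simp)
    show "\<forall>\<^sub>F \<delta> in at_right 0. (\<lambda>N. ?A \<delta> N + ?Z \<delta> N) \<longlonglongrightarrow> f \<delta>"
      using small A_lim
    proof eventually_elim
      case (elim \<delta>)
      then show ?case
        using tendsto_add[OF _ Z_lim, of "?A \<delta>" "f \<delta>"] by simp
    qed
  qed (rule f_lim)
qed

end
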